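(* Let $\gamma\in(0,1)$, $\mathcal{S}=\{s_0,s_1\}$, $\mathcal{A}=\{a_0,a_1\}$, $d_0=(1/2,1/2)$, and $\mathcal{R}(s,a)=\mathbb{1}\{s=s_0,a=a_0\}+\mathbb{1}\{s=s_1,a=a_1\}$. Let $\hat\Pi=\{\pi_0,\pi_1,\pi_2\}$ where $\pi_0$ plays $a_0$ at both states, $\pi_1$ plays $a_0$ at $s_0$ and $a_1$ at $s_1$, and $\pi_2$ plays $a_1$ at $s_0$ and $a_0$ at $s_1$ (deterministically). Then: (i) for every transition model $\mathcal{T}$, the discounted visit counts $\mathcal{F}^{\pi_0}_{\mathcal{T}},\mathcal{F}^{\pi_1}_{\mathcal{T}},\mathcal{F}^{\pi_2}_{\mathcal{T}}$ are not collinear; (ii) for every transition model $\mathcal{T}$, $\frac{1}{1-\gamma}=J_{\mathcal{T}}(\pi_1)>J_{\mathcal{T}}(\pi_0)>J_{\mathcal{T}}(\pi_2)=0$. Consequently every pair of transition models is equivalent on $\hat\Pi$, so there is no pair of transition models that is non-trivial, non-equivalent and unexploitable on $\hat\Pi$ for this task.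
   Context: Discounted visit counts: $\mathcal{F}^\pi_{\mathcal{T}}(s,a)=\mathbb{E}\big[\sum_{t\ge0}\gamma^t\mathbb{1}(s_t=s,a_t=a)\big]$ with $s_0\sim d_0$, $a_t\sim\pi(\cdot\mid s_t)$, $s_{t+1}\sim\mathcal{T}(\cdot\mid s_t,a_t)$; value $J_{\mathcal{T}}(\pi)=\langle\mathcal{R},\mathcal{F}^\pi_{\mathcal{T}}\rangle$. Collinear means all the vectors lie on a single line in $\mathbb{R}^{|\mathcal{S}||\mathcal{A}|}$. $J$ is trivial on $\Pi$ if constant on $\Pi$; $J_1,J_2$ are equivalent on $\Pi$ if for all $\pi,\pi'\in\Pi$, $J_1(\pi)\ge J_1(\pi')\iff J_2(\pi)\ge J_2(\pi')$. $(\mathcal{T},\mathcal{T}')$ is exploitable relative to $\Pi$ if there are $\pi,\pi'\in\Pi$ with $J_{\mathcal{T}}(\pi)>J_{\mathcal{T}}(\pi')$ and $J_{\mathcal{T}'}(\pi')>J_{\mathcal{T}'}(\pi)$; otherwise unexploitable. A pair of transition models is called non-trivial/non-equivalent on $\Pi$ if both induced value functions are non-trivial on $\Pi$ / they are not equivalent on $\Pi$. *)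

theory Defs
  imports "HOL-Analysis.Analysis"
begin

datatype st = S0 | S1
datatype act = A0 | A1

lemma UNIV_st: "(UNIV :: st set) = {S0, S1}"
  using st.exhaust by auto

lemma UNIV_act: "(UNIV :: act set) = {A0, A1}"
  using act.exhaust by auto

instance st :: finite
  by standard (simp add: UNIV_st)

instance act :: finite
  by standard (simp add: UNIV_act)

definition valid_transition :: "(st \<Rightarrow> act \<Rightarrow> st \<Rightarrow> real) \<Rightarrow> bool" where
  "valid_transition T \<longleftrightarrow> (\<forall>s a s'. 0 \<le> T s a s') \<and> (\<forall>s a. (\<Sum>s'\<in>UNIV. T s a s') = 1)"

definition det_policy :: "(st \<Rightarrow> act) \<Rightarrow> st \<Rightarrow> act \<Rightarrow> real" where
  "det_policy f = (\<lambda>s a. if a = f s then 1 else 0)"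

primrec state_dist :: "(st \<Rightarrow> real) \<Rightarrow> (st \<Rightarrow> act \<Rightarrow> st \<Rightarrow> real) \<Rightarrow> (st \<Rightarrow> act \<Rightarrow> real)
    \<Rightarrow> nat \<Rightarrow> st \<Rightarrow> real" where
  "state_dist d0 T pol 0 = d0"
| "state_dist d0 T pol (Suc t) =
     (\<lambda>s'. \<Sum>s\<in>UNIV. \<Sum>a\<in>UNIV. state_dist d0 T pol t s * pol s a * T s a s')"

definition visit_counts :: "real \<Rightarrow> (st \<Rightarrow> real) \<Rightarrow> (st \<Rightarrow> act \<Rightarrow> st \<Rightarrow> real)
    \<Rightarrow> (st \<Rightarrow> act \<Rightarrow> real) \<Rightarrow> st \<times> act \<Rightarrow> real" where
  "visit_counts \<gamma> d0 T pol = (\<lambda>(s, a). \<Sum>t. \<gamma> ^ t * (state_dist d0 T pol t s * pol s a))"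

definition visit_vec :: "real \<Rightarrow> (st \<Rightarrow> real) \<Rightarrow> (st \<Rightarrow> act \<Rightarrow> st \<Rightarrow> real)
    \<Rightarrow> (st \<Rightarrow> act \<Rightarrow> real) \<Rightarrow> real ^ (st \<times> act)" where
  "visit_vec \<gamma> d0 T pol = (\<chi> p. visit_counts \<gamma> d0 T pol p)"

definition value_fn :: "real \<Rightarrow> (st \<Rightarrow> real) \<Rightarrow> (st \<times> act \<Rightarrow> real)
    \<Rightarrow> (st \<Rightarrow> act \<Rightarrow> st \<Rightarrow> real) \<Rightarrow> (st \<Rightarrow> act \<Rightarrow> real) \<Rightarrow> real" where
  "value_fn \<gamma> d0 R T pol = (\<Sum>p\<in>UNIV. R p * visit_counts \<gamma> d0 T pol p)"

definition trivial_on :: "'p set \<Rightarrow> ('p \<Rightarrow> real) \<Rightarrow> bool" where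
  "trivial_on P J \<longleftrightarrow> (\<forall>pol\<in>P. \<forall>pol'\<in>P. J pol = J pol')"

definition equivalent_on :: "'p set \<Rightarrow> ('p \<Rightarrow> real) \<Rightarrow> ('p \<Rightarrow> real) \<Rightarrow> bool" where
  "equivalent_on P J1 J2 \<longleftrightarrow> (\<forall>pol\<in>P. \<forall>pol'\<in>P. J1 pol \<ge> J1 pol' \<longleftrightarrow> J2 pol \<ge> J2 pol')"

definition exploitable_on :: "'p set \<Rightarrow> ('p \<Rightarrow> real) \<Rightarrow> ('p \<Rightarrow> real) \<Rightarrow> bool" where
  "exploitable_on P J1 J2 \<longleftrightarrow> (\<exists>pol\<in>P. \<exists>pol'\<in>P. J1 pol > J1 pol' \<and> J2 pol' > J2 pol)"

definition d0_ex :: "st \<Rightarrow> real" where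
  "d0_ex = (\<lambda>s. 1/2)"

definition R_ex :: "st \<times> act \<Rightarrow> real" where
  "R_ex = (\<lambda>(s, a). (if s = S0 \<and> a = A0 then 1 else 0) + (if s = S1 \<and> a = A1 then 1 else 0))"

definition pi0 :: "st \<Rightarrow> act \<Rightarrow> real" where
  "pi0 = det_policy (\<lambda>s. A0)"

definition pi1 :: "st \<Rightarrow> act \<Rightarrow> real" where
  "pi1 = det_policy (\<lambda>s. if s = S0 then A0 else A1)"

definition pi2 :: "st \<Rightarrow> act \<Rightarrow> real" where
  "pi2 = det_policy (\<lambda>s. if s = S0 then A1 else A0)"

definition Pi_hat :: "(st \<Rightarrow> act \<Rightarrow> real) set" where
  "Pi_hat = {pi0, pi1, pi2}"

end

theory Submission
  imports Defs
begin

text \<open>Under a deterministic policy f the visit counts are F(s, a) = \<rho>(s) [a = f s], where the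
  discounted state occupancy \<rho> is positive (d0 has full support) and has total mass 1/(1 - \<gamma>).
  Hence J(\<pi>1) = \<rho>(S0) + \<rho>(S1) = 1/(1 - \<gamma>), J(\<pi>2) = 0 and J(\<pi>0) = \<rho>(S0) lies strictly in
  between, whatever the transition model: all models rank \<Pi> identically. For non-collinearity,
  the minor of F1 - F0 and F2 - F0 on the coordinates (S1, A1), (S0, A1) is the product of the
  occupancy of S1 under \<pi>1 and that of S0 under \<pi>2, hence positive.\<close>

definition prob_vector :: "('a::finite \<Rightarrow> real) \<Rightarrow> bool" where
  "prob_vector p \<longleftrightarrow> (\<forall>x. 0 \<le> p x) \<and> sum p UNIV = 1"

definition occupancy :: "real \<Rightarrow> (st \<Rightarrow> real) \<Rightarrow> (st \<Rightarrow> act \<Rightarrow> st \<Rightarrow> real)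
    \<Rightarrow> (st \<Rightarrow> act \<Rightarrow> real) \<Rightarrow> st \<Rightarrow> real" where
  "occupancy \<gamma> d0 T pol s = (\<Sum>t. \<gamma> ^ t * state_dist d0 T pol t s)"

definition stochastic_policy :: "(st \<Rightarrow> act \<Rightarrow> real) \<Rightarrow> bool" where
  "stochastic_policy pol \<longleftrightarrow> (\<forall>s. prob_vector (pol s))"

lemma prob_vector_le_1: "prob_vector p \<Longrightarrow> p x \<le> 1"
  unfolding prob_vector_def by (metis finite UNIV_I member_le_sum)

lemma valid_transition_iff_prob_vector: "valid_transition T \<longleftrightarrow> (\<forall>s a. prob_vector (T s a))"
  by (auto simp: valid_transition_def prob_vector_def)

lemma stochastic_policy_det_policy: "stochastic_policy (det_policy f)"
  by (simp add: stochastic_policy_def prob_vector_def det_policy_def)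

lemma prob_vector_d0_ex: "prob_vector d0_ex"
  by (simp add: prob_vector_def d0_ex_def UNIV_st)

lemma prob_vector_state_dist:
  assumes T: "valid_transition T" and d0: "prob_vector d0" and pol: "stochastic_policy pol"
  shows "prob_vector (state_dist d0 T pol t)"
proof (induction t)
  case 0
  show ?case using d0 by simp
next
  case (Suc t)
  let ?D = "state_dist d0 T pol t"
  have nonneg: "0 \<le> ?D s * pol s a * T s a s'" for s a s'
    using Suc pol T by (simp add: stochastic_policy_def prob_vector_def valid_transition_iff_prob_vector)
  have "(\<Sum>s'\<in>UNIV. \<Sum>s\<in>UNIV. \<Sum>a\<in>UNIV. ?D s * pol s a * T s a s')
      = (\<Sum>s\<in>UNIV. \<Sum>s'\<in>UNIV. \<Sum>a\<in>UNIV. ?D s * pol s a * T s a s')"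
    by (rule sum.swap)
  also have "\<dots> = (\<Sum>s\<in>UNIV. \<Sum>a\<in>UNIV. \<Sum>s'\<in>UNIV. ?D s * pol s a * T s a s')"
    by (rule sum.cong[OF refl], rule sum.swap)
  also have "\<dots> = (\<Sum>s\<in>UNIV. \<Sum>a\<in>UNIV. ?D s * pol s a * (\<Sum>s'\<in>UNIV. T s a s'))"
    by (simp add: sum_distrib_left)
  also have "\<dots> = (\<Sum>s\<in>UNIV. ?D s * (\<Sum>a\<in>UNIV. pol s a))"
    using T by (simp add: valid_transition_def sum_distrib_left)
  also have "\<dots> = 1"
    using pol Suc by (simp add: stochastic_policy_def prob_vector_def)
  finally show ?case
    using nonneg by (simp add: prob_vector_def sum_nonneg)
qed

context
  fixes \<gamma> :: real and d0 :: "st \<Rightarrow> real" and T :: "st \<Rightarrow> act \<Rightarrow> st \<Rightarrow> real"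
    and pol :: "st \<Rightarrow> act \<Rightarrow> real"
  assumes discount: "0 \<le> \<gamma>" "\<gamma> < 1"
    and T: "valid_transition T" and d0: "prob_vector d0" and pol: "stochastic_policy pol"
begin

lemma summable_discounted_state_dist: "summable (\<lambda>t. \<gamma> ^ t * state_dist d0 T pol t s)"
proof (rule summable_comparison_test[where g = "\<lambda>t. \<gamma> ^ t"])
  have "0 \<le> state_dist d0 T pol t s \<and> state_dist d0 T pol t s \<le> 1" for t
    using prob_vector_state_dist[OF T d0 pol] prob_vector_le_1[OF prob_vector_state_dist[OF T d0 pol]]
    unfolding prob_vector_def by blast
  then show "\<exists>N. \<forall>t\<ge>N. norm (\<gamma> ^ t * state_dist d0 T pol t s) \<le> \<gamma> ^ t"
    using discount by (auto simp: abs_mult intro!: exI[of _ 0] mult_left_le)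
  show "summable (\<lambda>t. \<gamma> ^ t)"
    using discount by simp
qed

lemma occupancy_pos: "0 < d0 s \<Longrightarrow> 0 < occupancy \<gamma> d0 T pol s"
  unfolding occupancy_def
  using prob_vector_state_dist[OF T d0 pol] discount
  by (intro suminf_pos2[OF summable_discounted_state_dist, where i = 0])
     (auto simp: prob_vector_def)

lemma sum_occupancy: "(\<Sum>s\<in>UNIV. occupancy \<gamma> d0 T pol s) = 1 / (1 - \<gamma>)"
proof -
  have "(\<Sum>s\<in>UNIV. occupancy \<gamma> d0 T pol s) = (\<Sum>t. \<Sum>s\<in>UNIV. \<gamma> ^ t * state_dist d0 T pol t s)"
    unfolding occupancy_def using summable_discounted_state_dist by (simp add: suminf_sum)
  also have "\<dots> = (\<Sum>t. \<gamma> ^ t)"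
    using prob_vector_state_dist[OF T d0 pol] by (simp add: prob_vector_def flip: sum_distrib_left)
  also have "\<dots> = 1 / (1 - \<gamma>)"
    using discount by (simp add: suminf_geometric)
  finally show ?thesis .
qed

lemma visit_counts_eq_occupancy:
  "visit_counts \<gamma> d0 T pol (s, a) = occupancy \<gamma> d0 T pol s * pol s a"
  unfolding visit_counts_def occupancy_def
  using suminf_mult2[OF summable_discounted_state_dist, where c = "pol s a"] by (simp add: mult.assoc)

end

lemma visit_vec_det_policy:
  assumes "0 \<le> \<gamma>" "\<gamma> < 1" "valid_transition T" "prob_vector d0"
  shows "visit_vec \<gamma> d0 T (det_policy f) $ (s, a) =
    (if a = f s then occupancy \<gamma> d0 T (det_policy f) s else 0)"
  using visit_counts_eq_occupancy[OF assms stochastic_policy_det_policy]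
  by (simp add: visit_vec_def det_policy_def)

lemma value_fn_det_policy:
  assumes "0 \<le> \<gamma>" "\<gamma> < 1" "valid_transition T" "prob_vector d0"
  shows "value_fn \<gamma> d0 R T (det_policy f) = (\<Sum>s\<in>UNIV. R (s, f s) * occupancy \<gamma> d0 T (det_policy f) s)"
proof -
  have "value_fn \<gamma> d0 R T (det_policy f) =
      (\<Sum>s\<in>UNIV. \<Sum>a\<in>UNIV. R (s, a) * (occupancy \<gamma> d0 T (det_policy f) s * det_policy f s a))"
    unfolding value_fn_def UNIV_Times_UNIV[symmetric] sum.cartesian_product
    using visit_counts_eq_occupancy[OF assms stochastic_policy_det_policy] by (auto intro!: sum.cong)
  also have "\<dots> = (\<Sum>s\<in>UNIV. R (s, f s) * occupancy \<gamma> d0 T (det_policy f) s)"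
    by (simp add: det_policy_def if_distrib[where f = "times _"] sum.delta cong: if_cong)
  finally show ?thesis .
qed

lemma collinear_imp_minor_eq_0:
  fixes x y z :: "real ^ 'n"
  assumes "collinear {x, y, z}"
  shows "(y - x) $ i * (z - x) $ j = (y - x) $ j * (z - x) $ i"
proof -
  have "collinear {0, y - x, z - x}"
    using assms collinear_3[of y x z] by (simp add: insert_commute)
  then consider "y - x = 0" | "z - x = 0" | c where "z - x = c *\<^sub>R (y - x)"
    unfolding collinear_lemma by blast
  then show ?thesis
    by cases auto
qed

context
  fixes \<gamma> :: real and T :: "st \<Rightarrow> act \<Rightarrow> st \<Rightarrow> real"
  assumes discount: "0 < \<gamma>" "\<gamma> < 1" and T: "valid_transition T"
begin

abbreviation occ :: "(st \<Rightarrow> act) \<Rightarrow> st \<Rightarrow> real" where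
  "occ f \<equiv> occupancy \<gamma> d0_ex T (det_policy f)"

lemma occ_pos: "0 < occ f s"
  using discount by (intro occupancy_pos[OF _ _ T prob_vector_d0_ex stochastic_policy_det_policy])
    (simp_all add: d0_ex_def)

lemma occ_S0_plus_S1: "occ f S0 + occ f S1 = 1 / (1 - \<gamma>)"
  using discount sum_occupancy[OF _ _ T prob_vector_d0_ex stochastic_policy_det_policy]
  by (simp add: UNIV_st)

lemma value_fn_R_ex_det_policy:
  "value_fn \<gamma> d0_ex R_ex T (det_policy f) =
     (if f S0 = A0 then occ f S0 else 0) + (if f S1 = A1 then occ f S1 else 0)"
  using discount by (simp add: value_fn_det_policy[OF _ _ T prob_vector_d0_ex] UNIV_st R_ex_def)

lemma value_fn_pi_hat_ranking:
  "1 / (1 - \<gamma>) = value_fn \<gamma> d0_ex R_ex T pi1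
   \<and> value_fn \<gamma> d0_ex R_ex T pi1 > value_fn \<gamma> d0_ex R_ex T pi0
   \<and> value_fn \<gamma> d0_ex R_ex T pi0 > value_fn \<gamma> d0_ex R_ex T pi2
   \<and> value_fn \<gamma> d0_ex R_ex T pi2 = 0"
  using occ_S0_plus_S1[of "\<lambda>s. A0"] occ_S0_plus_S1[of "\<lambda>s. if s = S0 then A0 else A1"]
    occ_pos[of "\<lambda>s. A0" S0] occ_pos[of "\<lambda>s. A0" S1]
  by (simp add: pi0_def pi1_def pi2_def value_fn_R_ex_det_policy)

lemma not_collinear_visit_vec_pi_hat:
  "\<not> collinear {visit_vec \<gamma> d0_ex T pi0, visit_vec \<gamma> d0_ex T pi1, visit_vec \<gamma> d0_ex T pi2}"
proof
  assume "collinear {visit_vec \<gamma> d0_ex T pi0, visit_vec \<gamma> d0_ex T pi1, visit_vec \<gamma> d0_ex T pi2}"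
  from collinear_imp_minor_eq_0[OF this, of "(S1, A1)" "(S0, A1)"]
  have "occ (\<lambda>s. if s = S0 then A0 else A1) S1 * occ (\<lambda>s. if s = S0 then A1 else A0) S0 = 0"
    using discount by (simp add: pi0_def pi1_def pi2_def visit_vec_det_policy[OF _ _ T prob_vector_d0_ex])
  then show False
    using occ_pos by (metis mult_pos_pos less_irrefl)
qed

end

theorem mainTheorem5:
  fixes \<gamma> :: real
  assumes "0 < \<gamma>" and "\<gamma> < 1"
  shows "(\<forall>T. valid_transition T \<longrightarrow>
            \<not> collinear {visit_vec \<gamma> d0_ex T pi0, visit_vec \<gamma> d0_ex T pi1, visit_vec \<gamma> d0_ex T pi2})
       \<and> (\<forall>T. valid_transition T \<longrightarrow>
            1 / (1 - \<gamma>) = value_fn \<gamma> d0_ex R_ex T pi1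
            \<and> value_fn \<gamma> d0_ex R_ex T pi1 > value_fn \<gamma> d0_ex R_ex T pi0
            \<and> value_fn \<gamma> d0_ex R_ex T pi0 > value_fn \<gamma> d0_ex R_ex T pi2
            \<and> value_fn \<gamma> d0_ex R_ex T pi2 = 0)
       \<and> (\<forall>T T'. valid_transition T \<longrightarrow> valid_transition T' \<longrightarrow>
            equivalent_on Pi_hat (value_fn \<gamma> d0_ex R_ex T) (value_fn \<gamma> d0_ex R_ex T'))
       \<and> \<not> (\<exists>T T'. valid_transition T \<and> valid_transition T'
            \<and> \<not> trivial_on Pi_hat (value_fn \<gamma> d0_ex R_ex T)
            \<and> \<not> trivial_on Pi_hat (value_fn \<gamma> d0_ex R_ex T')
            \<and> \<not> equivalent_on Pi_hat (value_fn \<gamma> d0_ex R_ex T) (value_fn \<gamma> d0_ex R_ex T')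
            \<and> \<not> exploitable_on Pi_hat (value_fn \<gamma> d0_ex R_ex T) (value_fn \<gamma> d0_ex R_ex T'))"
proof -
  have equivalent: "equivalent_on Pi_hat (value_fn \<gamma> d0_ex R_ex T) (value_fn \<gamma> d0_ex R_ex T')"
    if "valid_transition T" "valid_transition T'" for T T'
    using value_fn_pi_hat_ranking[OF assms that(1)] value_fn_pi_hat_ranking[OF assms that(2)]
    unfolding equivalent_on_def Pi_hat_def by auto
  show ?thesis
    using not_collinear_visit_vec_pi_hat[OF assms] value_fn_pi_hat_ranking[OF assms] equivalent
    by blast
qed

end
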